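(* Let $f:\mathbb{R}\to\mathbb{C}$ be Lebesgue measurable and suppose there exist constants $a,c\in\mathbb{C}$ and $b\in\mathbb{R}$ such that $f(x)=ce^{ax}$ for almost every $x>b$, or alternatively $f(x)=ce^{ax}$ for almost every $x<b$. Then $\mathcal G(f,\mathbb{R}^2)$ is linearly independent, unless $f(x)=ce^{ax}$ for almost every $x\in\mathbb{R}$.
   Context: For $\alpha,\beta\in\mathbb{R}$, $M_\alpha T_\beta f(x)=e^{2\pi i \alpha x}f(x-\beta)$, and $\mathcal G(f,\mathbb{R}^2)=\{M_\alpha T_\beta f:\alpha,\beta\in\mathbb{R}\}$. Measurable functions equal a.e. are identified; $\mathcal G(f,\mathbb{R}^2)$ is linearly independent if every finite linear combination $\sum c_{(\alpha,\beta)}M_\alpha T_\beta f$ over distinct pairs $(\alpha,\beta)$ with coefficients not all zero is not zero almost everywhere. *)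

theory Defs
  imports "HOL-Analysis.Analysis"
begin

definition MT :: "real \<Rightarrow> real \<Rightarrow> (real \<Rightarrow> complex) \<Rightarrow> real \<Rightarrow> complex" where
  "MT \<alpha> \<beta> f x = exp (2 * pi * \<i> * complex_of_real (\<alpha> * x)) * f (x - \<beta>)"

text \<open>Linear independence of G(f, R^2) = {M_alpha T_beta f : alpha, beta real}, with functions
  identified when equal a.e.: every finite linear combination over distinct pairs
  (alpha,beta) that vanishes a.e. has all coefficients zero.\<close>
definition gabor_lin_indep :: "(real \<Rightarrow> complex) \<Rightarrow> bool" where
  "gabor_lin_indep f \<longleftrightarrow>
     (\<forall>S :: (real \<times> real) set. \<forall>c :: real \<times> real \<Rightarrow> complex.
        finite S \<longrightarrow>
        (AE x in lebesgue. (\<Sum>p\<in>S. c p * MT (fst p) (snd p) f x) = 0) \<longrightarrow>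
        (\<forall>p\<in>S. c p = 0))"

end

theory Submission
  imports Defs "HOL-Complex_Analysis.Complex_Analysis"
begin

text \<open>
  Put \<open>g x = f x - c e\<^sup>a\<^sup>x\<close>, which vanishes a.e. on a right half-line but not a.e.
  Far to the right, a vanishing combination \<open>\<Sum> w\<^sub>p M\<^sub>\<alpha> T\<^sub>\<beta> f\<close> reduces to \<open>e\<^sup>a\<^sup>x\<close> times a
  trigonometric polynomial; this extends to an entire function vanishing on a set of positive
  measure, hence vanishes identically, so the same combination of translates of \<open>g\<close> vanishes.
  Let \<open>s\<close> be the essential supremum of the support of \<open>g\<close> and \<open>\<beta>\<close> the largest shift carrying
  a nonzero coefficient. Just left of \<open>s + \<beta>\<close> only the terms with shift \<open>\<beta>\<close> survive, so
  \<open>P x \<cdot> g (x - \<beta>) = 0\<close> there for a trigonometric polynomial \<open>P\<close> in the frequencies \<open>\<alpha>\<close>;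
  as \<open>g (x - \<beta>)\<close> is not a.e. zero there, \<open>P\<close> vanishes identically, and exponentials with
  distinct frequencies are linearly independent. The left half-line case follows by \<open>x \<mapsto> -x\<close>.
\<close>

lemma AE_lebesgue_affine:
  fixes t c :: real
  assumes c: "c \<noteq> 0" and P: "AE x in lebesgue. P x"
  shows "AE x in lebesgue. P (t + c * x)"
proof -
  from P obtain N where N: "negligible N" "{x. \<not> P x} \<subseteq> N"
    by (auto simp: eventually_ae_filter_negligible)
  have "(\<lambda>y. (y - t) / c) differentiable_on N"
    using c by (auto intro!: derivative_eq_intros simp: differentiable_on_def)
  then have "negligible ((\<lambda>y. (y - t) / c) ` N)"
    by (intro negligible_differentiable_image_negligible) (auto simp: N)
  moreover have "{x. \<not> P (t + c * x)} \<subseteq> (\<lambda>y. (y - t) / c) ` N"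
  proof
    fix x assume "x \<in> {x. \<not> P (t + c * x)}"
    then have "t + c * x \<in> N" using N(2) by auto
    moreover have "x = ((t + c * x) - t) / c" using c by simp
    ultimately show "x \<in> (\<lambda>y. (y - t) / c) ` N" by blast
  qed
  ultimately show ?thesis by (auto simp: eventually_ae_filter_negligible)
qed

lemma AE_lebesgue_shift:
  fixes \<beta> :: real
  assumes "AE x in lebesgue. P x"
  shows "AE x in lebesgue. P (x - \<beta>)"
  using AE_lebesgue_affine[OF _ assms, of 1 "- \<beta>"] by simp

lemma AE_lebesgue_reflect:
  assumes "AE x in lebesgue. P x"
  shows "AE x in lebesgue. P (- x :: real)"
  using AE_lebesgue_affine[OF _ assms, of "- 1" 0] by simp

lemma AE_lebesgue_not_in_countable:
  fixes Z :: "real set"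
  assumes "countable Z"
  shows "AE x in lebesgue. x \<notin> Z"
proof -
  have "Z \<in> null_sets lebesgue"
    using countable_imp_null_set_lborel[OF assms] null_sets_completionI by blast
  then show ?thesis
    by (auto simp: eventually_ae_filter_negligible negligible_iff_null_sets)
qed

lemma not_AE_lebesgue_not_in_open:
  fixes I :: "real set"
  assumes "open I" "I \<noteq> {}"
  shows "\<not> (AE x in lebesgue. x \<notin> I)"
  using assms open_not_negligible negligible_subset
  by (auto simp: eventually_ae_filter_negligible)

lemma entire_eq_0_if_zero_on_uncountable:
  fixes F :: "complex \<Rightarrow> complex" and Z :: "real set"
  assumes F: "F holomorphic_on UNIV" and Z: "uncountable Z"
    and zero: "\<And>x. x \<in> Z \<Longrightarrow> F (of_real x) = 0"
  shows "F z = 0"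
proof -
  have "\<exists>n::nat. infinite (Z \<inter> {- real n..real n})"
  proof (rule ccontr)
    assume "\<not> ?thesis"
    then have "countable (\<Union>n::nat. Z \<inter> {- real n..real n})"
      by (intro countable_UN) (auto intro: countable_finite)
    moreover have "Z = (\<Union>n::nat. Z \<inter> {- real n..real n})"
    proof (intro equalityI subsetI)
      fix x assume "x \<in> Z"
      moreover obtain n :: nat where "\<bar>x\<bar> \<le> real n" using real_arch_simple by blast
      ultimately show "x \<in> (\<Union>n::nat. Z \<inter> {- real n..real n})"
        by (auto simp: abs_le_iff intro!: exI[of _ n])
    qed auto
    ultimately show False using Z by simp
  qed
  then obtain n :: nat where "infinite (Z \<inter> {- real n..real n})" ..
  then obtain \<xi> where "\<xi> islimpt (Z \<inter> {- real n..real n})"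
    using bounded_infinite_imp_islimpt bounded_Int bounded_closed_interval by blast
  then have "\<xi> islimpt Z" by (rule islimpt_subset) auto
  then obtain X where X: "\<And>k. X k \<in> Z - {\<xi>}" "X \<longlonglongrightarrow> \<xi>"
    unfolding islimpt_sequential by blast
  have "of_real \<xi> islimpt (of_real ` Z :: complex set)"
    unfolding islimpt_sequential
    using X by (intro exI[of _ "\<lambda>k. of_real (X k)"]) (auto intro: tendsto_of_real)
  with F zero show ?thesis
    by (intro analytic_continuation[of F UNIV "of_real ` Z" "of_real \<xi>" z]) auto
qed

lemma entire_eq_0_if_not_AE_nonzero:
  fixes F :: "complex \<Rightarrow> complex"
  assumes F: "F holomorphic_on UNIV"
    and not_AE: "\<not> (AE x in lebesgue. F (of_real x) \<noteq> 0)"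
  shows "F z = 0"
proof (rule entire_eq_0_if_zero_on_uncountable[OF F])
  show "uncountable {x. F (of_real x) = 0}"
    using AE_lebesgue_not_in_countable not_AE by force
qed simp

lemma exp_sum_coeffs_eq_0:
  fixes \<omega> w :: "'a \<Rightarrow> complex"
  assumes "finite A" "inj_on \<omega> A" "\<And>z. (\<Sum>a\<in>A. w a * exp (\<omega> a * z)) = 0"
  shows "\<forall>a\<in>A. w a = 0"
  using assms
proof (induction A arbitrary: w rule: finite_induct)
  case empty
  then show ?case by simp
next
  case (insert m A)
  have deriv: "((\<lambda>z. \<Sum>a\<in>insert m A. w a * exp (\<omega> a * z)) has_field_derivative
      (\<Sum>a\<in>insert m A. w a * \<omega> a * exp (\<omega> a * z))) (at z)" for z
    by (auto intro!: derivative_eq_intros sum.cong)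
  have sum_0: "(\<lambda>z. \<Sum>a\<in>insert m A. w a * exp (\<omega> a * z)) = (\<lambda>_. 0)"
    using insert.prems(2) by simp
  have deriv_0: "(\<Sum>a\<in>insert m A. w a * \<omega> a * exp (\<omega> a * z)) = 0" for z
    using DERIV_unique[OF deriv[unfolded sum_0] DERIV_const] .
  \<comment> \<open>Differentiating and subtracting \<open>\<omega> m\<close> times the sum eliminates the term of \<open>m\<close>.\<close>
  have "(\<Sum>a\<in>A. (w a * (\<omega> a - \<omega> m)) * exp (\<omega> a * z)) = 0" for z
  proof -
    have "(\<Sum>a\<in>A. (w a * (\<omega> a - \<omega> m)) * exp (\<omega> a * z))
        = (\<Sum>a\<in>insert m A. (w a * (\<omega> a - \<omega> m)) * exp (\<omega> a * z))"
      using insert.hyps by simp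
    also have "\<dots> = (\<Sum>a\<in>insert m A. w a * \<omega> a * exp (\<omega> a * z))
                   - \<omega> m * (\<Sum>a\<in>insert m A. w a * exp (\<omega> a * z))"
      by (simp add: sum_distrib_left sum_subtractf [symmetric] algebra_simps)
    finally show ?thesis using deriv_0 insert.prems(2) by simp
  qed
  moreover have "\<omega> a \<noteq> \<omega> m" if "a \<in> A" for a
    using that insert.prems(1) insert.hyps(2) by (metis inj_on_eq_iff insertCI)
  ultimately have A: "\<forall>a\<in>A. w a = 0"
    using insert.IH[of "\<lambda>a. w a * (\<omega> a - \<omega> m)"] insert.prems(1) by auto
  then have "w m = 0" using insert.prems(2)[of 0] insert.hyps by simp
  with A show ?case by simp
qed

definition trig_poly :: "('a \<Rightarrow> complex) \<Rightarrow> ('a \<Rightarrow> real) \<Rightarrow> 'a set \<Rightarrow> complex \<Rightarrow> complex" where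
  "trig_poly w \<phi> S z = (\<Sum>p\<in>S. w p * exp (of_real (2 * pi) * \<i> * of_real (\<phi> p) * z))"

lemma trig_poly_of_real:
  "trig_poly w \<phi> S (of_real x) = (\<Sum>p\<in>S. w p * exp (of_real (2 * pi) * \<i> * of_real (\<phi> p * x)))"
  by (simp add: trig_poly_def mult.assoc)

lemma trig_poly_eq_0_if_not_AE_nonzero:
  assumes "\<not> (AE x in lebesgue. trig_poly w \<phi> S (of_real x) \<noteq> 0)"
  shows "trig_poly w \<phi> S z = 0"
  using assms unfolding trig_poly_def
  by (intro entire_eq_0_if_not_AE_nonzero) (auto intro!: holomorphic_intros)

lemma trig_poly_coeffs_eq_0:
  assumes "finite S" "inj_on \<phi> S"
    and "\<not> (AE x in lebesgue. trig_poly w \<phi> S (of_real x) \<noteq> 0)"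
  shows "\<forall>p\<in>S. w p = 0"
proof (rule exp_sum_coeffs_eq_0[OF \<open>finite S\<close>])
  show "inj_on (\<lambda>p. of_real (2 * pi) * \<i> * of_real (\<phi> p)) S"
    using \<open>inj_on \<phi> S\<close> by (auto simp: inj_on_def)
  show "(\<Sum>p\<in>S. w p * exp (of_real (2 * pi) * \<i> * of_real (\<phi> p) * z)) = 0" for z
    using trig_poly_eq_0_if_not_AE_nonzero[OF assms(3)] by (simp add: trig_poly_def)
qed

lemma finite_Max_isolated:
  fixes A :: "real set"
  assumes "finite A" "A \<noteq> {}"
  obtains \<epsilon> where "\<epsilon> > 0" "\<And>x. x \<in> A \<Longrightarrow> x \<noteq> Max A \<Longrightarrow> x \<le> Max A - \<epsilon>"
proof
  define \<epsilon> where "\<epsilon> = Min (insert 1 ((\<lambda>x. Max A - x) ` {x\<in>A. x \<noteq> Max A}))"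
  show "\<epsilon> > 0"
    unfolding \<epsilon>_def using assms
    by (subst Min_gr_iff) (force simp: less_le dest: Max_ge[OF assms(1)])+
  fix x assume "x \<in> A" "x \<noteq> Max A"
  then have "\<epsilon> \<le> Max A - x"
    unfolding \<epsilon>_def using assms(1) by (intro Min_le) auto
  then show "x \<le> Max A - \<epsilon>" by simp
qed

lemma AE_greater_Inf:
  fixes T :: "real set"
  assumes "T \<noteq> {}" "bdd_below T" "\<And>t. t \<in> T \<Longrightarrow> AE x in M. x > t \<longrightarrow> P x"
  shows "AE x in M. x > Inf T \<longrightarrow> P x"
proof -
  have "\<exists>t\<in>T. t < Inf T + 1 / real (Suc n)" for n
    using cInf_less_iff[OF assms(1,2), of "Inf T + 1 / real (Suc n)"] by simp
  then obtain t where t: "\<And>n. t n \<in> T" "\<And>n. t n < Inf T + 1 / real (Suc n)"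
    by metis
  have "AE x in M. \<forall>n. x > t n \<longrightarrow> P x"
    using assms(3) t(1) by (subst AE_all_countable) blast
  then show ?thesis
  proof eventually_elim
    case (elim x)
    show ?case
    proof
      assume "x > Inf T"
      then obtain n where "1 / real (Suc n) < x - Inf T"
        by (metis diff_gt_0_iff_gt inverse_eq_divide reals_Archimedean)
      with t(2)[of n] have "t n < x" by linarith
      with elim show "P x" by blast
    qed
  qed
qed

lemma essential_right_endpoint:
  fixes g :: "real \<Rightarrow> 'a :: zero"
  assumes tail: "AE x in lebesgue. x > b \<longrightarrow> g x = 0"
    and nz: "\<not> (AE x in lebesgue. g x = 0)"
  obtains s where "AE x in lebesgue. x > s \<longrightarrow> g x = 0"
    and "\<And>\<epsilon>. \<epsilon> > 0 \<Longrightarrow> \<not> (AE x in lebesgue. s - \<epsilon> < x \<and> x < s \<longrightarrow> g x = 0)"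
proof -
  define T where "T = {t. AE x in lebesgue. x > t \<longrightarrow> g x = 0}"
  have up: "t' \<in> T" if "t \<in> T" "t \<le> t'" for t t'
    using that unfolding T_def by (auto elim!: eventually_mono)
  have "b \<in> T" using tail by (simp add: T_def)
  have bdd: "bdd_below T"
  proof (rule ccontr)
    assume "\<not> bdd_below T"
    then have "- real n \<in> T" for n :: nat
      using up unfolding bdd_below_def by (meson linorder_not_le order_less_imp_le)
    then have "AE x in lebesgue. \<forall>n::nat. x > - real n \<longrightarrow> g x = 0"
      by (subst AE_all_countable) (simp add: T_def)
    then have "AE x in lebesgue. g x = 0"
    proof eventually_elim
      case (elim x)
      obtain n :: nat where "- x < real n" using reals_Archimedean2 by blast
      then have "- real n < x" by linarith
      with elim show ?case by blast
    qed
    with nz show False ..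
  qed
  define s where "s = Inf T"
  have above: "AE x in lebesgue. x > s \<longrightarrow> g x = 0"
    unfolding s_def using \<open>b \<in> T\<close> bdd by (intro AE_greater_Inf) (auto simp: T_def)
  moreover have "\<not> (AE x in lebesgue. s - \<epsilon> < x \<and> x < s \<longrightarrow> g x = 0)" if "\<epsilon> > 0" for \<epsilon>
  proof
    assume "AE x in lebesgue. s - \<epsilon> < x \<and> x < s \<longrightarrow> g x = 0"
    with above AE_lebesgue_not_in_countable[of "{s}", simplified]
    have "AE x in lebesgue. x > s - \<epsilon> \<longrightarrow> g x = 0"
      by eventually_elim (metis linorder_neqE_linordered_idom singletonI)
    then have "s - \<epsilon> \<in> T" by (simp add: T_def)
    then show False using cInf_lower[OF _ bdd] \<open>\<epsilon> > 0\<close> by (fastforce simp: s_def)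
  qed
  ultimately show thesis using that by blast
qed

lemma MT_right_tail_eq_0:
  assumes "AE x in lebesgue. x > b \<longrightarrow> g x = 0"
  shows "AE x in lebesgue. x > b + \<beta> \<longrightarrow> MT \<alpha> \<beta> g x = 0"
  using AE_lebesgue_shift[OF assms, of \<beta>] by eventually_elim (auto simp: MT_def)

lemma MT_exp:
  "MT \<alpha> \<beta> (\<lambda>y. c * exp (a * of_real y)) x
     = exp (a * of_real x) * (c * exp (- a * of_real \<beta>) * exp (of_real (2 * pi) * \<i> * of_real (\<alpha> * x)))"
proof -
  have "exp (a * of_real (x - \<beta>)) = exp (a * of_real x) * exp (- a * of_real \<beta>)"
    by (simp add: algebra_simps exp_diff exp_minus field_simps)
  then show ?thesis unfolding MT_def by (simp add: algebra_simps)
qed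

lemma MT_add: "MT \<alpha> \<beta> (\<lambda>y. f y + g y) x = MT \<alpha> \<beta> f x + MT \<alpha> \<beta> g x"
  by (simp add: MT_def distrib_left)

lemma MT_reflect: "MT (- \<alpha>) (- \<beta>) (\<lambda>y. f (- y)) x = MT \<alpha> \<beta> f (- x)"
proof -
  have "- (x - - \<beta>) = - x - \<beta>" by simp
  then show ?thesis unfolding MT_def by simp
qed

lemma MT_sum_right_tail_eq_0:
  assumes S: "finite S" and tail: "AE x in lebesgue. x > b \<longrightarrow> g x = 0"
  shows "AE x in lebesgue. x > b + Max (insert 0 (snd ` S)) \<longrightarrow>
           (\<Sum>p\<in>S. w p * MT (fst p) (snd p) g x) = 0"
proof -
  have "AE x in lebesgue. \<forall>p\<in>S. x > b + snd p \<longrightarrow> MT (fst p) (snd p) g x = 0"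
    using MT_right_tail_eq_0[OF tail] S by (simp add: eventually_ball_finite)
  then show ?thesis
  proof eventually_elim
    case (elim x)
    show ?case
    proof
      assume "x > b + Max (insert 0 (snd ` S))"
      moreover have "snd p \<le> Max (insert 0 (snd ` S))" if "p \<in> S" for p
        using S that by (intro Max_ge) auto
      ultimately have "\<forall>p\<in>S. MT (fst p) (snd p) g x = 0"
        using elim by force
      then show "(\<Sum>p\<in>S. w p * MT (fst p) (snd p) g x) = 0" by simp
    qed
  qed
qed

lemma MT_sum_near_right_edge:
  assumes S: "finite S" and above: "AE x in lebesgue. x > s \<longrightarrow> g x = 0"
    and gap: "\<And>p. p \<in> S \<Longrightarrow> w p \<noteq> 0 \<Longrightarrow> snd p \<noteq> \<beta> \<Longrightarrow> snd p \<le> \<beta> - \<epsilon>"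
  shows "AE x in lebesgue. s + \<beta> - \<epsilon> < x \<and> x < s + \<beta> \<longrightarrow>
           (\<Sum>p\<in>S. w p * MT (fst p) (snd p) g x)
             = trig_poly w fst {p\<in>S. snd p = \<beta>} (of_real x) * g (x - \<beta>)"
proof -
  have "AE x in lebesgue. \<forall>p\<in>S. x > s + snd p \<longrightarrow> MT (fst p) (snd p) g x = 0"
    using MT_right_tail_eq_0[OF above] S by (simp add: eventually_ball_finite)
  then show ?thesis
  proof eventually_elim
    case (elim x)
    show ?case
    proof
      assume x: "s + \<beta> - \<epsilon> < x \<and> x < s + \<beta>"
      have "x > s + snd p" if "p \<in> S" "w p \<noteq> 0" "snd p \<noteq> \<beta>" for p
        using gap[OF that] x by linarith
      with elim have "(\<Sum>p\<in>S. w p * MT (fst p) (snd p) g x)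
          = (\<Sum>p\<in>{p\<in>S. snd p = \<beta>}. w p * MT (fst p) (snd p) g x)"
        using S by (intro sum.mono_neutral_right) auto
      also have "\<dots> = trig_poly w fst {p\<in>S. snd p = \<beta>} (of_real x) * g (x - \<beta>)"
        unfolding trig_poly_of_real sum_distrib_right by (intro sum.cong) (auto simp: MT_def)
      finally show "(\<Sum>p\<in>S. w p * MT (fst p) (snd p) g x)
          = trig_poly w fst {p\<in>S. snd p = \<beta>} (of_real x) * g (x - \<beta>)" .
    qed
  qed
qed

lemma MT_sum_add_exp:
  "(\<Sum>p\<in>S. w p * MT (fst p) (snd p) (\<lambda>y. g y + c * exp (a * of_real y)) x)
     = (\<Sum>p\<in>S. w p * MT (fst p) (snd p) g x)
       + exp (a * of_real x) * trig_poly (\<lambda>p. w p * (c * exp (- a * of_real (snd p)))) fst S (of_real x)"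
proof -
  have "w p * MT (fst p) (snd p) (\<lambda>y. g y + c * exp (a * of_real y)) x
      = w p * MT (fst p) (snd p) g x
        + exp (a * of_real x) * (w p * (c * exp (- a * of_real (snd p)))
            * exp (of_real (2 * pi) * \<i> * of_real (fst p * x)))" for p
    by (simp only: MT_add MT_exp) (simp add: algebra_simps)
  then show ?thesis
    by (simp add: trig_poly_of_real sum.distrib sum_distrib_left)
qed

lemma gabor_lin_indep_if_right_tail_eq_0:
  fixes g :: "real \<Rightarrow> complex"
  assumes tail: "AE x in lebesgue. x > b \<longrightarrow> g x = 0"
    and nz: "\<not> (AE x in lebesgue. g x = 0)"
  shows "gabor_lin_indep g"
  unfolding gabor_lin_indep_def
proof (intro allI impI)
  fix S :: "(real \<times> real) set" and w :: "real \<times> real \<Rightarrow> complex"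
  assume S: "finite S"
    and sum_0: "AE x in lebesgue. (\<Sum>p\<in>S. w p * MT (fst p) (snd p) g x) = 0"
  obtain s where above: "AE x in lebesgue. x > s \<longrightarrow> g x = 0"
    and below: "\<And>\<epsilon>. \<epsilon> > 0 \<Longrightarrow> \<not> (AE x in lebesgue. s - \<epsilon> < x \<and> x < s \<longrightarrow> g x = 0)"
    using essential_right_endpoint[OF tail nz] by blast
  show "\<forall>p\<in>S. w p = 0"
  proof (rule ccontr)
    assume "\<not> (\<forall>p\<in>S. w p = 0)"
    define B where "B = snd ` {p\<in>S. w p \<noteq> 0}"
    have "finite B" "B \<noteq> {}"
      using S \<open>\<not> (\<forall>p\<in>S. w p = 0)\<close> by (auto simp: B_def)
    define \<beta> where "\<beta> = Max B"
    obtain \<epsilon> where "\<epsilon> > 0" and gap: "\<And>t. t \<in> B \<Longrightarrow> t \<noteq> \<beta> \<Longrightarrow> t \<le> \<beta> - \<epsilon>"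
      using finite_Max_isolated[OF \<open>finite B\<close> \<open>B \<noteq> {}\<close>] unfolding \<beta>_def by blast
    define P where "P = trig_poly w fst {p\<in>S. snd p = \<beta>}"
    have vanish: "AE x in lebesgue. s + \<beta> - \<epsilon> < x \<and> x < s + \<beta> \<longrightarrow> P (of_real x) * g (x - \<beta>) = 0"
      using MT_sum_near_right_edge[OF S above, of w \<beta> \<epsilon>] sum_0 gap
      by (auto simp: P_def B_def elim: eventually_elim2)
    have g_nz: "\<not> (AE x in lebesgue. s + \<beta> - \<epsilon> < x \<and> x < s + \<beta> \<longrightarrow> g (x - \<beta>) = 0)"
    proof
      assume "AE x in lebesgue. s + \<beta> - \<epsilon> < x \<and> x < s + \<beta> \<longrightarrow> g (x - \<beta>) = 0"
      from AE_lebesgue_shift[OF this, of "- \<beta>"]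
      have "AE x in lebesgue. s - \<epsilon> < x \<and> x < s \<longrightarrow> g x = 0" by simp
      with below[OF \<open>\<epsilon> > 0\<close>] show False ..
    qed
    have "\<not> (AE x in lebesgue. P (of_real x) \<noteq> 0)"
    proof
      assume "AE x in lebesgue. P (of_real x) \<noteq> 0"
      with vanish have "AE x in lebesgue. s + \<beta> - \<epsilon> < x \<and> x < s + \<beta> \<longrightarrow> g (x - \<beta>) = 0"
        by eventually_elim auto
      with g_nz show False ..
    qed
    then have "\<forall>p\<in>{p\<in>S. snd p = \<beta>}. w p = 0"
      unfolding P_def using S
      by (intro trig_poly_coeffs_eq_0) (auto simp: inj_on_def prod_eq_iff)
    moreover have "\<beta> \<in> B"
      using \<open>finite B\<close> \<open>B \<noteq> {}\<close> by (simp add: \<beta>_def)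
    ultimately show False by (auto simp: B_def)
  qed
qed

lemma gabor_lin_indep_if_right_tail_exp:
  fixes f :: "real \<Rightarrow> complex" and a c :: complex
  assumes tail: "AE x in lebesgue. x > b \<longrightarrow> f x = c * exp (a * of_real x)"
    and not_exp: "\<not> (AE x in lebesgue. f x = c * exp (a * of_real x))"
  shows "gabor_lin_indep f"
  unfolding gabor_lin_indep_def
proof (intro allI impI)
  fix S :: "(real \<times> real) set" and w :: "real \<times> real \<Rightarrow> complex"
  assume S: "finite S"
    and sum_0: "AE x in lebesgue. (\<Sum>p\<in>S. w p * MT (fst p) (snd p) f x) = 0"
  define g where "g x = f x - c * exp (a * of_real x)" for x
  define Q where "Q = trig_poly (\<lambda>p. w p * (c * exp (- a * of_real (snd p)))) fst S"
  define B where "B = b + Max (insert 0 (snd ` S))"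
  have f_eq: "f = (\<lambda>y. g y + c * exp (a * of_real y))" by (simp add: g_def)
  note split = MT_sum_add_exp[where w=w and S=S and g=g and c=c and a=a, folded f_eq Q_def]
  have g_tail: "AE x in lebesgue. x > b \<longrightarrow> g x = 0"
    using tail by eventually_elim (simp add: g_def)
  have Q_0: "AE x in lebesgue. x \<in> {B<..} \<longrightarrow> Q (of_real x) = 0"
    using MT_sum_right_tail_eq_0[OF S g_tail, of w] sum_0
    by eventually_elim (auto simp: B_def split)
  have "\<not> (AE x in lebesgue. Q (of_real x) \<noteq> 0)"
  proof
    assume "AE x in lebesgue. Q (of_real x) \<noteq> 0"
    with Q_0 have "AE x in lebesgue. x \<notin> {B<..}" by eventually_elim auto
    with not_AE_lebesgue_not_in_open[of "{B<..}"] show False by simp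
  qed
  then have "Q z = 0" for z
    unfolding Q_def by (rule trig_poly_eq_0_if_not_AE_nonzero)
  with sum_0 have "AE x in lebesgue. (\<Sum>p\<in>S. w p * MT (fst p) (snd p) g x) = 0"
    by (simp add: split)
  moreover have "\<not> (AE x in lebesgue. g x = 0)"
    using not_exp by (auto simp: g_def elim: eventually_mono)
  ultimately show "\<forall>p\<in>S. w p = 0"
    using gabor_lin_indep_if_right_tail_eq_0[OF g_tail] S
    unfolding gabor_lin_indep_def by simp
qed

lemma gabor_lin_indep_reflect:
  assumes indep: "gabor_lin_indep (\<lambda>x. f (- x))"
  shows "gabor_lin_indep f"
  unfolding gabor_lin_indep_def
proof (intro allI impI)
  fix S :: "(real \<times> real) set" and w :: "real \<times> real \<Rightarrow> complex"
  assume S: "finite S"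
    and sum_0: "AE x in lebesgue. (\<Sum>p\<in>S. w p * MT (fst p) (snd p) f x) = 0"
  define r :: "real \<times> real \<Rightarrow> real \<times> real" where "r p = (- fst p, - snd p)" for p
  have r_r: "r (r p) = p" for p by (simp add: r_def)
  then have "inj r" by (rule inj_on_inverseI)
  have "AE x in lebesgue. (\<Sum>q\<in>r ` S. w (r q) * MT (fst q) (snd q) (\<lambda>y. f (- y)) x) = 0"
    using AE_lebesgue_reflect[OF sum_0]
  proof eventually_elim
    case (elim x)
    have "(\<Sum>q\<in>r ` S. w (r q) * MT (fst q) (snd q) (\<lambda>y. f (- y)) x)
        = (\<Sum>p\<in>S. w (r (r p)) * MT (fst (r p)) (snd (r p)) (\<lambda>y. f (- y)) x)"
      by (subst sum.reindex) (auto intro: inj_on_subset[OF \<open>inj r\<close>])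
    also have "\<dots> = (\<Sum>p\<in>S. w p * MT (fst p) (snd p) f (- x))"
      by (simp add: r_r r_def MT_reflect)
    finally show ?case using elim by simp
  qed
  then show "\<forall>p\<in>S. w p = 0"
    using indep[unfolded gabor_lin_indep_def, rule_format, of "r ` S" "\<lambda>q. w (r q)"] S
    by (simp add: r_r) (metis imageI r_r)
qed

theorem theorem4p1:
  fixes f :: "real \<Rightarrow> complex" and a c :: complex and b :: real
  assumes meas: "f \<in> borel_measurable lebesgue"
    and tail: "(AE x in lebesgue. x > b \<longrightarrow> f x = c * exp (a * complex_of_real x))
             \<or> (AE x in lebesgue. x < b \<longrightarrow> f x = c * exp (a * complex_of_real x))"
  shows "gabor_lin_indep f \<or> (AE x in lebesgue. f x = c * exp (a * complex_of_real x))"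
proof (cases "AE x in lebesgue. f x = c * exp (a * complex_of_real x)")
  case True
  then show ?thesis ..
next
  case not_exp: False
  from tail have "gabor_lin_indep f"
  proof
    assume "AE x in lebesgue. x > b \<longrightarrow> f x = c * exp (a * complex_of_real x)"
    then show ?thesis using not_exp by (rule gabor_lin_indep_if_right_tail_exp)
  next
    assume left: "AE x in lebesgue. x < b \<longrightarrow> f x = c * exp (a * complex_of_real x)"
    have "AE x in lebesgue. x > - b \<longrightarrow> f (- x) = c * exp (- a * complex_of_real x)"
      using AE_lebesgue_reflect[OF left] by eventually_elim simp
    moreover have "\<not> (AE x in lebesgue. f (- x) = c * exp (- a * complex_of_real x))"
      using not_exp AE_lebesgue_reflect[of "\<lambda>x. f (- x) = c * exp (- a * complex_of_real x)"]
      by auto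
    ultimately show ?thesis
      by (rule gabor_lin_indep_reflect[OF gabor_lin_indep_if_right_tail_exp])
  qed
  then show ?thesis ..
qed

end
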